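(* Let $K$ be a field, $P=K[x_1,\dots,x_n]$, $g_1,\dots,g_r\in P$, $I=\langle g_1,\dots,g_r\rangle$, and let $Z=(z_1,\dots,z_s)$ be a tuple of distinct indeterminates among $x_1,\dots,x_n$. Then the following are equivalent: (a) the procedure $\mathrm{CHECK}$ applied to $(g_1,\dots,g_r)$ and $Z$ returns a weight tuple $W\in\mathbb{N}^n$ (rather than ``Fail''); (b) there exists a $Z$-separating tuple $(f_1,\dots,f_s)$ of polynomials in $I$ with $f_1,\dots,f_s\in\langle g_1,\dots,g_r\rangle_K$.
   Context: $\operatorname{Supp}(f)$ is the set of terms occurring in $f$; $\operatorname{Lin}(f)$ is the homogeneous degree-1 component of $f$; $\langle\cdot\rangle_K$ denotes $K$-linear span. A tuple $(f_1,\dots,f_s)$ of polynomials in an ideal $I$ is $Z$-separating if there is a term ordering $\sigma$ with $\operatorname{LT}_\sigma(f_i)=z_i$ for all $i$. Procedure $\mathrm{LI}$ (linear interreduction), applied to a tuple $Z=(z_1,\dots,z_s)$ of distinct indeterminates and polynomials $g_1,\dots,g_r$: let $t_1>\dots>t_m$ (lexicographic order, $x_1>\dots>x_n$) be the terms of $\bigcup_j\operatorname{Supp}(g_j)$ other than $z_1,\dots,z_s$; form the coefficient matrix $M$ of $g_1,\dots,g_r$ w.r.t. column order $(z_1,\dots,z_s,t_1,\dots,t_m)$; output the polynomials whose coefficient vectors are the nonzero rows of the reduced row echelon form of $M$, in order. Procedure $\mathrm{CHECK}$ on input $(g_1,\dots,g_r)$ and $Z$: (1) set $w_1=\dots=w_n=0$,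 $\delta=\max_j\deg(g_j)$, $d=1$. (2) In each $g_j$ delete every monomial not divisible by some indeterminate of $Z$. (3) If $\dim_K\langle\operatorname{Lin}(g_1),\dots,\operatorname{Lin}(g_r)\rangle_K<\#Z$, return ``Fail''. (4) Repeat: (i) replace the current list $g_1,\dots,g_r$ by the output of $\mathrm{LI}$ applied to the current $Z$ and the current list; (ii) let $\widetilde Z$ be the set of indeterminates of the current $Z$ that occur as elements of the current list; (iii) if $\widetilde Z=\emptyset$, return ``Fail''; (iv) for each $z\in\widetilde Z$, say $z=x_k$, set $w_k=d$ and remove $z$ from $Z$; (v) in each current $g_j$ delete every monomial not divisible by some indeterminate of the (updated) $Z$; (vi) replace $d$ by $\delta d+1$; until $Z$ is empty. (5) Return $W=(w_1,\dots,w_n)$. *)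

theory Defs
  imports "HOL-Library.Poly_Mapping" "Jordan_Normal_Form.Gauss_Jordan_Elimination"
begin

text \<open>The indeterminate
  x_(k+1) is encoded as the natural number k; a term (power product) is a finitely
  supported exponent vector nat-to-nat finitely supported map, and a polynomial is a finitely supported
  map from terms to coefficients.\<close>

type_synonym pterm = "nat \<Rightarrow>\<^sub>0 nat"
type_synonym 'a mpoly = "pterm \<Rightarrow>\<^sub>0 'a"

definition is_term :: "nat \<Rightarrow> pterm \<Rightarrow> bool" where
  "is_term n t \<longleftrightarrow> Poly_Mapping.keys t \<subseteq> {..<n}"

definition in_P :: "nat \<Rightarrow> 'a::zero mpoly \<Rightarrow> bool" where
  "in_P n f \<longleftrightarrow> (\<forall>t\<in>Poly_Mapping.keys f. is_term n t)"

definition var_term :: "nat \<Rightarrow> pterm" where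
  "var_term z = Poly_Mapping.single z 1"

definition var :: "nat \<Rightarrow> 'a::{zero,one} mpoly" where
  "var z = Poly_Mapping.single (var_term z) 1"

definition tdeg :: "pterm \<Rightarrow> nat" where
  "tdeg t = (\<Sum>i\<in>Poly_Mapping.keys t. Poly_Mapping.lookup t i)"

definition pdeg :: "'a::zero mpoly \<Rightarrow> nat" where
  "pdeg f = Max (insert 0 (tdeg ` Poly_Mapping.keys f))"

definition restrict_terms :: "(pterm \<Rightarrow> bool) \<Rightarrow> 'a::comm_monoid_add mpoly \<Rightarrow> 'a mpoly" where
  "restrict_terms Q f = (\<Sum>t\<in>{t\<in>Poly_Mapping.keys f. Q t}. Poly_Mapping.single t (Poly_Mapping.lookup f t))"

definition Lin :: "'a::comm_monoid_add mpoly \<Rightarrow> 'a mpoly" where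
  "Lin f = restrict_terms (\<lambda>t. tdeg t = 1) f"

definition del_nondiv :: "nat list \<Rightarrow> 'a::comm_monoid_add mpoly \<Rightarrow> 'a mpoly" where
  "del_nondiv zs f = restrict_terms (\<lambda>t. \<exists>z\<in>set zs. 0 < Poly_Mapping.lookup t z) f"

definition pscale :: "'a::field \<Rightarrow> 'a mpoly \<Rightarrow> 'a mpoly" where
  "pscale c f = Poly_Mapping.map ((*) c) f"

abbreviation Kspan :: "'a::field mpoly set \<Rightarrow> 'a mpoly set" where
  "Kspan S \<equiv> module.span pscale S"

abbreviation Kdim :: "'a::field mpoly set \<Rightarrow> nat" where
  "Kdim S \<equiv> vector_space.dim pscale S"

definition ideal_P :: "nat \<Rightarrow> 'a::field mpoly list \<Rightarrow> 'a mpoly set" where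
  "ideal_P n gs = {\<Sum>j<length gs. h j * gs ! j | h. \<forall>j<length gs. in_P n (h j)}"

definition term_ordering :: "nat \<Rightarrow> (pterm \<Rightarrow> pterm \<Rightarrow> bool) \<Rightarrow> bool" where
  "term_ordering n tle \<longleftrightarrow>
     (\<forall>t. is_term n t \<longrightarrow> tle t t) \<and>
     (\<forall>t s. is_term n t \<longrightarrow> is_term n s \<longrightarrow> tle t s \<longrightarrow> tle s t \<longrightarrow> t = s) \<and>
     (\<forall>t s u. is_term n t \<longrightarrow> is_term n s \<longrightarrow> is_term n u \<longrightarrow> tle t s \<longrightarrow> tle s u \<longrightarrow> tle t u) \<and>
     (\<forall>t s. is_term n t \<longrightarrow> is_term n s \<longrightarrow> tle t s \<or> tle s t) \<and>
     (\<forall>t s u. is_term n t \<longrightarrow> is_term n s \<longrightarrow> is_term n u \<longrightarrow> tle t s \<longrightarrow> tle (t + u) (s + u)) \<and>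
     (\<forall>t. is_term n t \<longrightarrow> tle 0 t)"

definition LT :: "(pterm \<Rightarrow> pterm \<Rightarrow> bool) \<Rightarrow> 'a::zero mpoly \<Rightarrow> pterm" where
  "LT tle f = (THE t. t \<in> Poly_Mapping.keys f \<and> (\<forall>s\<in>Poly_Mapping.keys f. tle s t))"

definition Z_separating :: "nat \<Rightarrow> nat list \<Rightarrow> 'a::zero mpoly list \<Rightarrow> bool" where
  "Z_separating n zs fs \<longleftrightarrow> length fs = length zs \<and>
     (\<exists>tle. term_ordering n tle \<and>
        (\<forall>i<length zs. fs ! i \<noteq> 0 \<and> LT tle (fs ! i) = var_term (zs ! i)))"

definition lex_gt :: "pterm \<Rightarrow> pterm \<Rightarrow> bool" where
  "lex_gt t s \<longleftrightarrow> (\<exists>k. Poly_Mapping.lookup s k < Poly_Mapping.lookup t k \<and> (\<forall>i<k. Poly_Mapping.lookup t i = Poly_Mapping.lookup s i))"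

definition LI :: "nat list \<Rightarrow> 'a::field mpoly list \<Rightarrow> 'a mpoly list" where
  "LI zs gs = (let
     T = (\<Union>g\<in>set gs. Poly_Mapping.keys g) - var_term ` set zs;
     ts = (THE ts. sorted_wrt lex_gt ts \<and> set ts = T);
     cols = map var_term zs @ ts;
     M = mat (length gs) (length cols) (\<lambda>(i, j). Poly_Mapping.lookup (gs ! i) (cols ! j));
     R = gauss_jordan_single M;
     rows = filter (\<lambda>v. v \<noteq> 0\<^sub>v (length cols)) (map (row R) [0..<dim_row R])
   in map (\<lambda>v. \<Sum>j<length cols. Poly_Mapping.single (cols ! j) (v $ j)) rows)"

text \<open>The repeat-loop (step 4) of CHECK; arguments: delta, d, current Z, current list, weights.\<close>
function check_loop :: "nat \<Rightarrow> nat \<Rightarrow> nat list \<Rightarrow> 'a::field mpoly list \<Rightarrow> (nat \<Rightarrow> nat)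
    \<Rightarrow> (nat \<Rightarrow> nat) option" where
  "check_loop \<delta> d zs gs w = (let
     gs1 = LI zs gs;
     zt = filter (\<lambda>z. var z \<in> set gs1) zs
   in if zt = [] then None
      else (let
        w' = (\<lambda>k. if k \<in> set zt then d else w k);
        zs' = filter (\<lambda>z. z \<notin> set zt) zs;
        gs2 = map (del_nondiv zs') gs1
      in if zs' = [] then Some w' else check_loop \<delta> (\<delta> * d + 1) zs' gs2 w'))"
  by pat_completeness auto
termination
proof (relation "measure (\<lambda>(\<delta>, d, zs, gs, w). length zs)", goal_cases)
  case 1 then show ?case by simp
next
  case (2 \<delta> d zs gs w gs1 zt w' zs' gs2)
  then obtain z where "z \<in> set zs" "z \<in> set zt" by (metis filter_empty_conv filter_is_subset list.set_sel(1) subsetD)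
  then have "length (filter (\<lambda>z. z \<notin> set zt) zs) < length zs"
    by (metis (mono_tags, lifting) length_filter_less)
  with 2 show ?case by simp
qed

text \<open>Procedure CHECK: None means "Fail", Some W the weight tuple (w_1..w_n).\<close>
definition CHECK :: "nat \<Rightarrow> 'a::field mpoly list \<Rightarrow> nat list \<Rightarrow> nat list option" where
  "CHECK n gs zs = (let
     \<delta> = Max (insert 0 (pdeg ` set gs));
     gs' = map (del_nondiv zs) gs
   in if Kdim (Lin ` set gs') < length zs then None
      else map_option (\<lambda>w. map w [0..<n]) (check_loop \<delta> 1 zs gs' (\<lambda>_. 0)))"

end

theory Submission
  imports Defs
begin

text \<open>
  Let V be the K-span of the g_j.  If CHECK succeeds, an indeterminate z removed in the round
  with counter d satisfies var z = del_nondiv Z f for some f in V, where Z is the set of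
  indeterminates still present in that round.  Every other term of f therefore involves only
  indeterminates that were removed earlier (weight at most the previous counter d', where
  d = \<delta> d' + 1) or never belonged to Z (weight 0); having degree at most \<delta>, it has weighted
  degree at most \<delta> d' < d = w(z).  So z is the leading term of f for the weighted degree
  ordering.

  Conversely, let \<sigma> be a term ordering with LT(f_i) = z_i.  The linear parts of the f_i,
  restricted to Z, are triangular with respect to \<sigma>, which gives the dimension test.  In every
  round the \<sigma>-smallest remaining z is found: each term of its witness f that is divisible by a
  remaining z' lies \<sigma>-above z' and hence above z, but f has no term above z, so deleting the
  terms not divisible by Z leaves a multiple of var z.  Thus var z lies in the current span, and
  a reduced row echelon form contains every unit vector of its row space.
\<close>

section \<open>Polynomials as a K-vector space\<close>

lemma lex_gt_iff_less: "lex_gt t s \<longleftrightarrow> s < t"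
  unfolding lex_gt_def by transfer (auto simp add: less_fun_def)

lemma lookup_pscale [simp]: "Poly_Mapping.lookup (pscale c f) t = c * Poly_Mapping.lookup f t"
  unfolding pscale_def by transfer (simp add: when_def)

lemma pscale_eq_mult: "pscale c f = Poly_Mapping.single 0 c * f"
  unfolding pscale_def by (rule mult_map_scale_conv_mult)

interpretation K: vector_space "pscale :: 'a::field \<Rightarrow> 'a mpoly \<Rightarrow> 'a mpoly"
  by unfold_locales (auto intro!: poly_mapping_eqI simp: lookup_add algebra_simps)

lemma (in vector_space) card_le_dim_if_independent_in_span:
  assumes "finite X" "independent B" "B \<subseteq> span X"
  shows "card B \<le> dim X"
proof -
  obtain A where A: "A \<subseteq> X" "independent A" "X \<subseteq> span A" "card A = dim X"
    by (rule basis_exists)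
  have "span X \<subseteq> span A" using A(3) by (rule span_minimal) (rule subspace_span)
  then have "B \<subseteq> span A" using assms(3) by blast
  moreover have "finite A" using A(1) assms(1) by (rule finite_subset)
  ultimately show ?thesis using independent_span_bound[of A B] assms(2) A(4) by simp
qed

lemma lookup_restrict_terms:
  "Poly_Mapping.lookup (restrict_terms Q f) t = (if Q t then Poly_Mapping.lookup f t else 0)"
proof -
  have "Poly_Mapping.lookup (restrict_terms Q f) t =
     (\<Sum>s\<in>{s\<in>Poly_Mapping.keys f. Q s}. if s = t then Poly_Mapping.lookup f s else 0)"
    unfolding restrict_terms_def lookup_sum by (simp add: lookup_single when_def)
  also have "\<dots> = (if Q t then Poly_Mapping.lookup f t else 0)"
    by (simp add: in_keys_iff)
  finally show ?thesis .
qed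

lemma restrict_terms_linear: "module_hom pscale pscale (restrict_terms Q :: 'a::field mpoly \<Rightarrow> _)"
  by unfold_locales (auto intro!: poly_mapping_eqI simp: lookup_restrict_terms lookup_add)

lemma lookup_Lin: "Poly_Mapping.lookup (Lin f) t = (if tdeg t = 1 then Poly_Mapping.lookup f t else 0)"
  unfolding Lin_def by (simp add: lookup_restrict_terms)

lemma Lin_linear: "module_hom pscale pscale (Lin :: 'a::field mpoly \<Rightarrow> _)"
  unfolding Lin_def[abs_def] by (rule restrict_terms_linear)

definition involves :: "nat list \<Rightarrow> pterm \<Rightarrow> bool" where
  "involves zs t \<longleftrightarrow> (\<exists>z\<in>set zs. 0 < Poly_Mapping.lookup t z)"

lemma lookup_del_nondiv:
  "Poly_Mapping.lookup (del_nondiv zs f) t = (if involves zs t then Poly_Mapping.lookup f t else 0)"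
  unfolding del_nondiv_def involves_def by (simp add: lookup_restrict_terms)

lemma del_nondiv_linear: "module_hom pscale pscale (del_nondiv zs :: 'a::field mpoly \<Rightarrow> _)"
  unfolding del_nondiv_def[abs_def] by (rule restrict_terms_linear)

lemma del_nondiv_del_nondiv:
  "set zs' \<subseteq> set zs \<Longrightarrow> del_nondiv zs' (del_nondiv zs f) = del_nondiv zs' f"
  by (rule poly_mapping_eqI) (auto simp: lookup_del_nondiv involves_def)

lemma keys_subset_if_in_span:
  assumes "(f :: 'a::field mpoly) \<in> Kspan S"
  shows "Poly_Mapping.keys f \<subseteq> (\<Union>g\<in>S. Poly_Mapping.keys g)"
  using assms
proof (induction rule: K.span_induct_alt)
  case (step c x y)
  have "Poly_Mapping.keys (pscale c x) \<subseteq> Poly_Mapping.keys x"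
    by (auto simp: in_keys_iff)
  then show ?case using step keys_add[of "pscale c x" y] by blast
qed simp

lemma in_P_if_in_span:
  assumes "\<forall>g\<in>set gs. in_P n g" "f \<in> Kspan (set gs)"
  shows "in_P n f"
  using assms keys_subset_if_in_span[OF assms(2)] unfolding in_P_def by blast

lemma tdeg_le_if_in_span:
  assumes "f \<in> Kspan (set gs)" "t \<in> Poly_Mapping.keys f"
  shows "tdeg t \<le> Max (insert 0 (pdeg ` set gs))"
proof -
  obtain g where g: "g \<in> set gs" "t \<in> Poly_Mapping.keys g"
    using keys_subset_if_in_span[OF assms(1)] assms(2) by blast
  have "tdeg t \<le> pdeg g" unfolding pdeg_def using g(2) by (intro Max_ge) auto
  also have "\<dots> \<le> Max (insert 0 (pdeg ` set gs))" using g(1) by (intro Max_ge) auto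
  finally show ?thesis .
qed

lemma in_P_add: "in_P n f \<Longrightarrow> in_P n g \<Longrightarrow> in_P n (f + g)"
  unfolding in_P_def using keys_add[of f g] by blast

lemma in_P_pscale: "in_P n f \<Longrightarrow> in_P n (pscale c f)"
  unfolding in_P_def by (auto simp: in_keys_iff)

lemma subspace_ideal_P: "K.subspace (ideal_P n gs)"
  unfolding K.subspace_def
proof (intro conjI ballI allI)
  show "0 \<in> ideal_P n gs"
    unfolding ideal_P_def by (intro CollectI exI[of _ "\<lambda>_. 0"]) (simp add: in_P_def)
next
  fix x y assume "x \<in> ideal_P n gs" "y \<in> ideal_P n gs"
  then obtain h1 h2 where h1: "x = (\<Sum>j<length gs. h1 j * gs ! j)" "\<forall>j<length gs. in_P n (h1 j)"
    and h2: "y = (\<Sum>j<length gs. h2 j * gs ! j)" "\<forall>j<length gs. in_P n (h2 j)"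
    unfolding ideal_P_def by blast
  show "x + y \<in> ideal_P n gs"
    unfolding ideal_P_def
    by (intro CollectI exI[of _ "\<lambda>j. h1 j + h2 j"]) (simp add: h1 h2 in_P_add distrib_right sum.distrib)
next
  fix c x assume "x \<in> ideal_P n gs"
  then obtain h where h: "x = (\<Sum>j<length gs. h j * gs ! j)" "\<forall>j<length gs. in_P n (h j)"
    unfolding ideal_P_def by blast
  have "pscale c x = (\<Sum>j<length gs. pscale c (h j) * gs ! j)"
    by (simp only: h pscale_eq_mult sum_distrib_left mult.assoc)
  then show "pscale c x \<in> ideal_P n gs"
    unfolding ideal_P_def by (intro CollectI exI[of _ "\<lambda>j. pscale c (h j)"]) (simp add: h(2) in_P_pscale)
qed

lemma set_subset_ideal_P: "set gs \<subseteq> ideal_P n gs"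
proof
  fix g assume "g \<in> set gs"
  then obtain k where k: "k < length gs" "g = gs ! k" by (auto simp: in_set_conv_nth)
  have "(\<Sum>j<length gs. (if j = k then 1 else 0) * gs ! j) = (\<Sum>j<length gs. if j = k then gs ! j else 0)"
    by (rule sum.cong) auto
  also have "\<dots> = g" using k by simp
  finally have g: "g = (\<Sum>j<length gs. (if j = k then 1 else 0) * gs ! j)" by simp
  have "\<forall>j<length gs. in_P n (if j = k then 1 else (0::'a mpoly))"
    by (simp add: in_P_def is_term_def)
  then show "g \<in> ideal_P n gs"
    unfolding ideal_P_def by (intro CollectI exI[of _ "\<lambda>j. if j = k then 1 else 0"] conjI g)
qed

lemma span_subset_ideal_P: "Kspan (set gs) \<subseteq> ideal_P n gs"
  by (rule K.span_minimal[OF set_subset_ideal_P subspace_ideal_P])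

section \<open>Term orderings and leading terms\<close>

lemma term_ordering_antisym:
  "term_ordering n tle \<Longrightarrow> is_term n t \<Longrightarrow> is_term n s \<Longrightarrow> tle t s \<Longrightarrow> tle s t \<Longrightarrow> t = s"
  unfolding term_ordering_def by blast

lemma term_ordering_trans:
  "term_ordering n tle \<Longrightarrow> is_term n t \<Longrightarrow> is_term n s \<Longrightarrow> is_term n u \<Longrightarrow> tle t s \<Longrightarrow> tle s u \<Longrightarrow> tle t u"
  unfolding term_ordering_def by blast

lemma term_ordering_total: "term_ordering n tle \<Longrightarrow> is_term n t \<Longrightarrow> is_term n s \<Longrightarrow> tle t s \<or> tle s t"
  unfolding term_ordering_def by blast

lemma term_ordering_add_right:
  "term_ordering n tle \<Longrightarrow> is_term n t \<Longrightarrow> is_term n s \<Longrightarrow> is_term n u \<Longrightarrow> tle t s \<Longrightarrow> tle (t + u) (s + u)"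
  unfolding term_ordering_def by blast

lemma term_ordering_zero_le: "term_ordering n tle \<Longrightarrow> is_term n t \<Longrightarrow> tle 0 t"
  unfolding term_ordering_def by blast

lemma finite_total_has_max:
  assumes "finite S" "S \<noteq> {}"
    and "\<And>x y. x \<in> S \<Longrightarrow> y \<in> S \<Longrightarrow> R x y \<or> R y x"
    and "\<And>x y z. x \<in> S \<Longrightarrow> y \<in> S \<Longrightarrow> z \<in> S \<Longrightarrow> R x y \<Longrightarrow> R y z \<Longrightarrow> R x z"
  shows "\<exists>m\<in>S. \<forall>s\<in>S. R s m"
  using assms
proof (induction S rule: finite_ne_induct)
  case (insert x F)
  have "\<exists>m\<in>F. \<forall>s\<in>F. R s m"
    by (rule insert.IH) (use insert.prems in blast)+
  then obtain m where m: "m \<in> F" "\<forall>s\<in>F. R s m" by blast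
  show ?case
  proof (cases "R m x")
    case True
    have "R s x" if "s \<in> F" for s
      using insert.prems(2)[of s m x] that m True by blast
    moreover have "R x x" using insert.prems(1) by blast
    ultimately show ?thesis by blast
  next
    case False
    then have "R x m" using m(1) insert.prems(1) by blast
    then show ?thesis using m by blast
  qed
qed blast

lemma term_ordering_has_max:
  assumes "term_ordering n tle" "finite S" "S \<noteq> {}" "\<forall>t\<in>S. is_term n t"
  shows "\<exists>m\<in>S. \<forall>s\<in>S. tle s m"
proof (rule finite_total_has_max[OF assms(2,3)])
  show "tle x y \<or> tle y x" if "x \<in> S" "y \<in> S" for x y
    using term_ordering_total[OF assms(1)] assms(4) that by blast
  show "tle x z" if "x \<in> S" "y \<in> S" "z \<in> S" "tle x y" "tle y z" for x y z
    using term_ordering_trans[OF assms(1)] assms(4) that by blast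
qed

lemma term_ordering_has_min:
  assumes "term_ordering n tle" "finite S" "S \<noteq> {}" "\<forall>t\<in>S. is_term n t"
  shows "\<exists>m\<in>S. \<forall>s\<in>S. tle m s"
proof (rule finite_total_has_max[OF assms(2,3), of "\<lambda>a b. tle b a"])
  show "tle y x \<or> tle x y" if "x \<in> S" "y \<in> S" for x y
    using term_ordering_total[OF assms(1)] assms(4) that by blast
  show "tle z x" if "x \<in> S" "y \<in> S" "z \<in> S" "tle y x" "tle z y" for x y z
    using term_ordering_trans[OF assms(1)] assms(4) that by blast
qed

lemma LT_eqI:
  assumes "t \<in> Poly_Mapping.keys f" "\<forall>s\<in>Poly_Mapping.keys f. tle s t"
    "\<forall>s\<in>Poly_Mapping.keys f. tle t s \<longrightarrow> s = t"
  shows "LT tle f = t"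
  unfolding LT_def using assms by (intro the_equality) auto

lemma LT_in_keys_max:
  assumes "term_ordering n tle" "in_P n f" "f \<noteq> 0"
  shows "LT tle f \<in> Poly_Mapping.keys f \<and> (\<forall>s\<in>Poly_Mapping.keys f. tle s (LT tle f))"
proof -
  have terms: "\<forall>t\<in>Poly_Mapping.keys f. is_term n t" using assms(2) unfolding in_P_def by blast
  obtain m where m: "m \<in> Poly_Mapping.keys f" "\<forall>s\<in>Poly_Mapping.keys f. tle s m"
    using term_ordering_has_max[OF assms(1) finite_keys _ terms] assms(3) by auto
  have "LT tle f = m"
  proof (rule LT_eqI[of m f tle, OF m])
    show "\<forall>s\<in>Poly_Mapping.keys f. tle m s \<longrightarrow> s = m"
      using m terms term_ordering_antisym[OF assms(1)] by blast
  qed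
  with m show ?thesis by simp
qed

lemma var_term_eq_iff: "var_term z = var_term z' \<longleftrightarrow> z = z'"
  unfolding var_term_def by (metis lookup_single_eq lookup_single_not_eq one_neq_zero)

lemma lookup_var_term: "Poly_Mapping.lookup (var_term z) i = (if i = z then 1 else 0)"
  unfolding var_term_def by (simp add: lookup_single when_def)

lemma is_term_var_term: "z < n \<Longrightarrow> is_term n (var_term z)"
  unfolding is_term_def var_term_def by simp

lemma tdeg_var_term: "tdeg (var_term z) = 1"
  unfolding tdeg_def var_term_def by simp

lemma involves_var_term: "z \<in> set zs \<Longrightarrow> involves zs (var_term z)"
  unfolding involves_def by (auto simp: lookup_var_term)

lemma var_term_le_if_divides:
  assumes TO: "term_ordering n tle" and t: "is_term n t" and z: "z < n"
    and pos: "0 < Poly_Mapping.lookup t z"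
  shows "tle (var_term z) t"
proof -
  define u where "u = t - var_term z"
  have tu: "u + var_term z = t"
    by (rule poly_mapping_eqI) (use pos in \<open>simp add: u_def lookup_add lookup_minus lookup_var_term\<close>)
  have "Poly_Mapping.keys u \<subseteq> Poly_Mapping.keys t"
    by (auto simp: u_def in_keys_iff lookup_minus lookup_var_term split: if_splits)
  then have u: "is_term n u" using t unfolding is_term_def by blast
  have "tle (0 + var_term z) (u + var_term z)"
    using term_ordering_add_right[OF TO _ u is_term_var_term[OF z] term_ordering_zero_le[OF TO u]]
    by (simp add: is_term_def)
  then show ?thesis using tu by simp
qed

subsection \<open>Weighted degree orderings\<close>

definition wdeg :: "(nat \<Rightarrow> nat) \<Rightarrow> pterm \<Rightarrow> nat" where
  "wdeg W t = (\<Sum>i\<in>Poly_Mapping.keys t. Poly_Mapping.lookup t i * W i)"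

lemma wdeg_eq_sum_superset:
  assumes "finite A" "Poly_Mapping.keys t \<subseteq> A"
  shows "wdeg W t = (\<Sum>i\<in>A. Poly_Mapping.lookup t i * W i)"
  unfolding wdeg_def
  by (rule sum.mono_neutral_left) (use assms in \<open>auto simp: in_keys_iff\<close>)

lemma wdeg_add: "wdeg W (t + u) = wdeg W t + wdeg W u"
proof -
  let ?A = "Poly_Mapping.keys t \<union> Poly_Mapping.keys u"
  have "wdeg W (t + u) = (\<Sum>i\<in>?A. Poly_Mapping.lookup (t + u) i * W i)"
    by (rule wdeg_eq_sum_superset) (use keys_add[of t u] in auto)
  also have "\<dots> = (\<Sum>i\<in>?A. Poly_Mapping.lookup t i * W i) + (\<Sum>i\<in>?A. Poly_Mapping.lookup u i * W i)"
    by (simp add: lookup_add algebra_simps sum.distrib)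
  also have "\<dots> = wdeg W t + wdeg W u"
    by (simp add: wdeg_eq_sum_superset[symmetric])
  finally show ?thesis .
qed

lemma wdeg_var_term: "wdeg W (var_term z) = W z"
  by (simp add: wdeg_def var_term_def)

lemma wdeg_le_tdeg:
  assumes "\<And>i. W i \<le> M"
  shows "wdeg W t \<le> M * tdeg t"
  unfolding wdeg_def tdeg_def sum_distrib_left
  by (rule sum_mono) (simp add: assms mult.commute)

lemma wdeg_cong:
  assumes "\<And>i. i \<in> Poly_Mapping.keys t \<Longrightarrow> W i = W' i"
  shows "wdeg W t = wdeg W' t"
  unfolding wdeg_def by (rule sum.cong) (simp_all add: assms)

lemma zero_le_pterm: "(0::pterm) \<le> t"
proof (cases "t = 0")
  case False
  then obtain k0 where "Poly_Mapping.lookup t k0 \<noteq> 0"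
    by (metis poly_mapping_eqI lookup_zero)
  define k where "k = (LEAST k. Poly_Mapping.lookup t k \<noteq> 0)"
  have "Poly_Mapping.lookup t k \<noteq> 0" unfolding k_def by (rule LeastI) fact
  moreover have "Poly_Mapping.lookup t k' = 0" if "k' < k" for k'
    using not_less_Least[of k' "\<lambda>k. Poly_Mapping.lookup t k \<noteq> 0"] that unfolding k_def by blast
  ultimately have "less_fun (Poly_Mapping.lookup 0) (Poly_Mapping.lookup t)"
    by (intro less_funI exI[of _ k]) auto
  then have "0 < t" by (simp add: less_poly_mapping.rep_eq)
  then show ?thesis by simp
qed simp

definition wdeg_ord :: "(nat \<Rightarrow> nat) \<Rightarrow> pterm \<Rightarrow> pterm \<Rightarrow> bool" where
  "wdeg_ord W t s \<longleftrightarrow> wdeg W t < wdeg W s \<or> (wdeg W t = wdeg W s \<and> t \<le> s)"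

lemma term_ordering_wdeg_ord: "term_ordering n (wdeg_ord W)"
  unfolding term_ordering_def wdeg_ord_def
proof (intro conjI allI impI)
  fix t s u :: pterm
  assume "wdeg W t < wdeg W s \<or> wdeg W t = wdeg W s \<and> t \<le> s"
  then show "wdeg W (t + u) < wdeg W (s + u) \<or> wdeg W (t + u) = wdeg W (s + u) \<and> t + u \<le> s + u"
    by (auto simp: wdeg_add intro: add_right_mono)
next
  fix t :: pterm
  have "wdeg W 0 = 0" by (simp add: wdeg_def)
  then show "wdeg W 0 < wdeg W t \<or> wdeg W 0 = wdeg W t \<and> 0 \<le> t"
    using zero_le_pterm[of t] by auto
qed auto

section \<open>Linear interreduction\<close>

definition poly_of_coeffs :: "pterm list \<Rightarrow> 'a::field vec \<Rightarrow> 'a mpoly" where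
  "poly_of_coeffs cs v = (\<Sum>j<length cs. Poly_Mapping.single (cs ! j) (v $ j))"

definition coeff_matrix :: "pterm list \<Rightarrow> 'a::field mpoly list \<Rightarrow> 'a mat" where
  "coeff_matrix cs ps = mat (length ps) (length cs) (\<lambda>(i, j). Poly_Mapping.lookup (ps ! i) (cs ! j))"

lemma keys_poly_of_coeffs: "Poly_Mapping.keys (poly_of_coeffs cs v) \<subseteq> set cs"
proof (rule subsetI, rule ccontr)
  fix t assume t: "t \<in> Poly_Mapping.keys (poly_of_coeffs cs v)" "t \<notin> set cs"
  have "Poly_Mapping.lookup (poly_of_coeffs cs v) t = 0"
    unfolding poly_of_coeffs_def lookup_sum
    by (rule sum.neutral) (use t(2) in \<open>auto simp: lookup_single when_def\<close>)
  with t(1) show False by (simp add: in_keys_iff)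
qed

lemma lookup_poly_of_coeffs:
  assumes "distinct cs" "k < length cs"
  shows "Poly_Mapping.lookup (poly_of_coeffs cs v) (cs ! k) = v $ k"
proof -
  have "Poly_Mapping.lookup (poly_of_coeffs cs v) (cs ! k) = (\<Sum>j<length cs. if j = k then v $ j else 0)"
    unfolding poly_of_coeffs_def lookup_sum
  proof (rule sum.cong[OF refl])
    fix j assume "j \<in> {..<length cs}"
    then have "cs ! j = cs ! k \<longleftrightarrow> j = k" using assms nth_eq_iff_index_eq by auto
    then show "Poly_Mapping.lookup (Poly_Mapping.single (cs ! j) (v $ j)) (cs ! k) = (if j = k then v $ j else 0)"
      by (simp add: lookup_single when_def)
  qed
  also have "\<dots> = v $ k" using assms(2) by simp
  finally show ?thesis .
qed

lemma poly_of_coeffs_zero: "poly_of_coeffs cs (0\<^sub>v (length cs)) = 0"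
  unfolding poly_of_coeffs_def by (rule sum.neutral) simp

lemma poly_eq_if_lookups_eq:
  fixes p q :: "'a::zero mpoly"
  assumes "Poly_Mapping.keys p \<subseteq> set cs" "Poly_Mapping.keys q \<subseteq> set cs"
    and "\<And>k. k < length cs \<Longrightarrow> Poly_Mapping.lookup p (cs ! k) = Poly_Mapping.lookup q (cs ! k)"
  shows "p = q"
proof (rule poly_mapping_eqI)
  fix t
  show "Poly_Mapping.lookup p t = Poly_Mapping.lookup q t"
  proof (cases "t \<in> set cs")
    case True
    then show ?thesis using assms(3) by (auto simp: in_set_conv_nth)
  next
    case False
    then have "t \<notin> Poly_Mapping.keys p" "t \<notin> Poly_Mapping.keys q" using assms(1,2) by blast+
    then show ?thesis by (simp add: in_keys_iff)
  qed
qed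

lemma keys_sum_pscale:
  "Poly_Mapping.keys (\<Sum>k<m. pscale (c k) (p k :: 'a::field mpoly)) \<subseteq> (\<Union>k<m. Poly_Mapping.keys (p k))"
proof
  fix t assume "t \<in> Poly_Mapping.keys (\<Sum>k<m. pscale (c k) (p k))"
  then have "(\<Sum>k<m. c k * Poly_Mapping.lookup (p k) t) \<noteq> 0" by (simp add: in_keys_iff lookup_sum)
  then obtain k where "k < m" "c k * Poly_Mapping.lookup (p k) t \<noteq> 0" by (meson lessThan_iff sum.neutral)
  then show "t \<in> (\<Union>k<m. Poly_Mapping.keys (p k))" by (auto simp: in_keys_iff)
qed

lemma poly_of_row_mult:
  assumes "distinct cs" "C \<in> carrier_mat l m" "B \<in> carrier_mat m (length cs)"
    and "\<And>k. k < m \<Longrightarrow> Poly_Mapping.keys (ps k) \<subseteq> set cs"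
    and "\<And>k j. k < m \<Longrightarrow> j < length cs \<Longrightarrow> B $$ (k, j) = Poly_Mapping.lookup (ps k) (cs ! j)"
    and "i < l"
  shows "poly_of_coeffs cs (row (C * B) i) = (\<Sum>k<m. pscale (C $$ (i, k)) (ps k))"
proof (rule poly_eq_if_lookups_eq[of _ cs])
  show "Poly_Mapping.keys (\<Sum>k<m. pscale (C $$ (i, k)) (ps k)) \<subseteq> set cs"
    using keys_sum_pscale[of "\<lambda>k. C $$ (i, k)" ps m] assms(4) by blast
  fix j assume j: "j < length cs"
  then show "Poly_Mapping.lookup (poly_of_coeffs cs (row (C * B) i)) (cs ! j) =
      Poly_Mapping.lookup (\<Sum>k<m. pscale (C $$ (i, k)) (ps k)) (cs ! j)"
    using assms by (simp add: lookup_poly_of_coeffs lookup_sum scalar_prod_def lessThan_atLeast0)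
qed (rule keys_poly_of_coeffs)

lemma lex_sorted_terms_eq:
  assumes "finite T"
  shows "(THE ts. sorted_wrt lex_gt ts \<and> set ts = T) = rev (sorted_list_of_set T)"
proof (rule the_equality)
  fix ts assume "sorted_wrt lex_gt ts \<and> set ts = T"
  then have "rev ts = sorted_list_of_set T"
    using assms by (intro strict_sorted_equal) (auto simp: sorted_wrt_rev lex_gt_iff_less[abs_def])
  then show "ts = rev (sorted_list_of_set T)" by (metis rev_rev_ident)
qed (use assms in \<open>simp add: sorted_wrt_rev lex_gt_iff_less[abs_def]\<close>)

lemma LI_gauss_jordan:
  fixes gs :: "'a::field mpoly list"
  assumes "distinct zs"
  obtains cs where "distinct cs" "\<And>g. g \<in> set gs \<Longrightarrow> Poly_Mapping.keys g \<subseteq> set cs"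
    "LI zs gs = map (poly_of_coeffs cs) (filter (\<lambda>v. v \<noteq> 0\<^sub>v (length cs))
       (map (row (gauss_jordan_single (coeff_matrix cs gs))) [0..<length gs]))"
proof
  define T where "T = (\<Union>g\<in>set gs. Poly_Mapping.keys g) - var_term ` set zs"
  define cs where "cs = map var_term zs @ (THE ts. sorted_wrt lex_gt ts \<and> set ts = T)"
  have T: "finite T" unfolding T_def by simp
  then show "distinct cs"
    unfolding cs_def lex_sorted_terms_eq[OF T] using assms
    by (auto simp: distinct_map inj_on_def var_term_eq_iff T_def)
  show "Poly_Mapping.keys g \<subseteq> set cs" if "g \<in> set gs" for g
    unfolding cs_def lex_sorted_terms_eq[OF T] using that T by (auto simp: T_def)
  have "dim_row (gauss_jordan_single (coeff_matrix cs gs)) = length gs"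
    using gauss_jordan_single(2)[OF _ refl, of "coeff_matrix cs gs" "length gs" "length cs"]
    by (simp add: coeff_matrix_def)
  then show "LI zs gs = map (poly_of_coeffs cs) (filter (\<lambda>v. v \<noteq> 0\<^sub>v (length cs))
       (map (row (gauss_jordan_single (coeff_matrix cs gs))) [0..<length gs]))"
    unfolding LI_def Let_def T_def[symmetric] cs_def[symmetric] poly_of_coeffs_def[abs_def]
      coeff_matrix_def by simp
qed

lemma span_LI:
  fixes gs :: "'a::field mpoly list"
  assumes "distinct zs"
  shows "Kspan (set (LI zs gs)) = Kspan (set gs)"
proof -
  obtain cs where cs: "distinct cs" and keys_gs: "\<And>g. g \<in> set gs \<Longrightarrow> Poly_Mapping.keys g \<subseteq> set cs"
    and LI: "LI zs gs = map (poly_of_coeffs cs) (filter (\<lambda>v. v \<noteq> 0\<^sub>v (length cs))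
       (map (row (gauss_jordan_single (coeff_matrix cs gs))) [0..<length gs]))"
    using LI_gauss_jordan[OF assms] by blast
  define m where "m = length gs"
  define M where "M = coeff_matrix cs gs"
  define R where "R = gauss_jordan_single M"
  define q where "q i = poly_of_coeffs cs (row R i)" for i
  have M: "M \<in> carrier_mat m (length cs)" unfolding M_def coeff_matrix_def m_def by simp
  have M_gs: "M $$ (k, j) = Poly_Mapping.lookup (gs ! k) (cs ! j)" if "k < m" "j < length cs" for k j
    using that unfolding M_def coeff_matrix_def m_def by simp
  obtain P Q where R: "R \<in> carrier_mat m (length cs)" "R = P * M"
    and PQ: "P \<in> carrier_mat m m" "Q \<in> carrier_mat m m" "Q * P = 1\<^sub>m m"
    using gauss_jordan_single(2,4)[OF M R_def[symmetric]] by blast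
  have QR: "Q * R = M"
    using R(2) PQ M assoc_mult_mat[OF PQ(2,1) M] by simp
  have q_from_gs: "q i = (\<Sum>k<m. pscale (P $$ (i, k)) (gs ! k))" if "i < m" for i
    unfolding q_def R(2)
    by (rule poly_of_row_mult[OF cs PQ(1) M _ M_gs that]) (use keys_gs m_def in auto)
  have gs_from_q: "gs ! k = (\<Sum>i<m. pscale (Q $$ (k, i)) (q i))" if "k < m" for k
  proof -
    have "gs ! k = poly_of_coeffs cs (row M k)"
      using that M cs keys_gs[of "gs ! k"]
      by (intro poly_eq_if_lookups_eq[of _ cs]) (auto simp: m_def M_gs keys_poly_of_coeffs lookup_poly_of_coeffs)
    also have "\<dots> = (\<Sum>i<m. pscale (Q $$ (k, i)) (q i))"
      unfolding QR[symmetric] using R(1) cs that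
      by (intro poly_of_row_mult[OF cs PQ(2) R(1)]) (auto simp: q_def keys_poly_of_coeffs lookup_poly_of_coeffs)
    finally show ?thesis .
  qed
  have set_LI: "set (LI zs gs) = q ` {i. i < m \<and> row R i \<noteq> 0\<^sub>v (length cs)}"
    unfolding LI R_def M_def q_def m_def by auto
  have q_in_span: "q i \<in> Kspan (set (LI zs gs))" if "i < m" for i
  proof (cases "row R i = 0\<^sub>v (length cs)")
    case True
    then show ?thesis by (simp add: q_def poly_of_coeffs_zero K.span_zero)
  qed (use that set_LI in \<open>blast intro: K.span_base\<close>)
  show ?thesis
  proof (rule antisym; rule K.span_minimal[OF _ K.subspace_span]; rule subsetI)
    fix p assume "p \<in> set (LI zs gs)"
    then obtain i where "i < m" "p = q i" unfolding set_LI by blast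
    then show "p \<in> Kspan (set gs)"
      using q_from_gs by (simp add: m_def) (intro K.span_sum K.span_scale K.span_base; simp)
  next
    fix g assume "g \<in> set gs"
    then obtain k where "k < m" "g = gs ! k" unfolding m_def by (auto simp: in_set_conv_nth)
    then show "g \<in> Kspan (set (LI zs gs))"
      using gs_from_q q_in_span by simp (intro K.span_sum K.span_scale; simp)
  qed
qed

lemma LI_pivot:
  fixes gs :: "'a::field mpoly list"
  assumes "distinct zs" "p \<in> set (LI zs gs)"
  shows "\<exists>t. Poly_Mapping.lookup p t = 1 \<and>
    (\<forall>p'\<in>set (LI zs gs). p' \<noteq> p \<longrightarrow> Poly_Mapping.lookup p' t = 0)"
proof -
  obtain cs where cs: "distinct cs"
    and LI: "LI zs gs = map (poly_of_coeffs cs) (filter (\<lambda>v. v \<noteq> 0\<^sub>v (length cs))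
       (map (row (gauss_jordan_single (coeff_matrix cs gs))) [0..<length gs]))"
    using LI_gauss_jordan[OF assms(1)] by blast
  define m where "m = length gs"
  define R where "R = gauss_jordan_single (coeff_matrix cs gs)"
  have "coeff_matrix cs gs \<in> carrier_mat m (length cs)" by (simp add: coeff_matrix_def m_def)
  then have R: "R \<in> carrier_mat m (length cs)" "row_echelon_form R"
    using gauss_jordan_single(2,3)[OF _ R_def[symmetric]] by blast+
  then obtain f where f: "pivot_fun R f (length cs)" unfolding row_echelon_form_def by auto
  have dR: "dim_row R = m" using R by simp
  have entry: "Poly_Mapping.lookup (poly_of_coeffs cs (row R i)) (cs ! j) = R $$ (i, j)"
    if "i < m" "j < length cs" for i j
    using that R cs by (simp add: lookup_poly_of_coeffs)
  have set_LI: "set (LI zs gs) = (\<lambda>i. poly_of_coeffs cs (row R i)) ` {i. i < m \<and> row R i \<noteq> 0\<^sub>v (length cs)}"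
    unfolding LI R_def m_def by auto
  obtain i where i: "i < m" "row R i \<noteq> 0\<^sub>v (length cs)" "p = poly_of_coeffs cs (row R i)"
    using assms(2) unfolding set_LI by blast
  have fi: "f i < length cs"
    using pivot_fun_zero_row_iff[OF f R(1) i(1)] pivot_funD(1)[OF dR f i(1)] i(2) by auto
  have "Poly_Mapping.lookup p (cs ! f i) = 1"
    using i entry[OF i(1) fi] pivot_funD(4)[OF dR f i(1) fi] by simp
  moreover have "Poly_Mapping.lookup p' (cs ! f i) = 0" if p': "p' \<in> set (LI zs gs)" "p' \<noteq> p" for p'
  proof -
    obtain i' where "i' < m" "i' \<noteq> i" "p' = poly_of_coeffs cs (row R i')"
      using p' unfolding set_LI using i(3) by blast
    then show ?thesis
      using entry[OF _ fi] pivot_funD(5)[OF dR f i(1) fi] by simp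
  qed
  ultimately show ?thesis by blast
qed

lemma monomial_mem_if_in_span_of_pivoted:
  fixes L :: "'a::field mpoly set"
  assumes fin: "finite L"
    and pivots: "\<forall>p\<in>L. \<exists>t. Poly_Mapping.lookup p t = 1 \<and>
      (\<forall>p'\<in>L. p' \<noteq> p \<longrightarrow> Poly_Mapping.lookup p' t = 0)"
    and v: "Poly_Mapping.single s 1 \<in> Kspan L"
  shows "Poly_Mapping.single s 1 \<in> L"
proof -
  obtain \<pi> where \<pi>: "\<forall>p\<in>L. Poly_Mapping.lookup p (\<pi> p) = 1 \<and>
      (\<forall>p'\<in>L. p' \<noteq> p \<longrightarrow> Poly_Mapping.lookup p' (\<pi> p) = 0)"
    using bchoice[OF pivots] by blast
  have piv: "Poly_Mapping.lookup p (\<pi> p) = 1" if "p \<in> L" for p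
    using \<pi> that by blast
  have piv0: "Poly_Mapping.lookup p' (\<pi> p) = 0" if "p \<in> L" "p' \<in> L" "p' \<noteq> p" for p p'
    using \<pi> that by blast
  let ?v = "Poly_Mapping.single s (1::'a)"
  obtain u where u: "?v = (\<Sum>p\<in>L. pscale (u p) p)"
    using v unfolding K.span_finite[OF fin] by blast
  have coeff: "u p = Poly_Mapping.lookup ?v (\<pi> p)" if "p \<in> L" for p
  proof -
    have "Poly_Mapping.lookup ?v (\<pi> p) = (\<Sum>p'\<in>L. u p' * Poly_Mapping.lookup p' (\<pi> p))"
      unfolding u by (simp add: lookup_sum)
    also have "\<dots> = (\<Sum>p'\<in>L. if p' = p then u p' else 0)"
      by (rule sum.cong[OF refl]) (use that piv piv0 in auto)
    finally show ?thesis using that fin by simp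
  qed
  have "\<exists>p\<in>L. u p \<noteq> 0"
  proof (rule ccontr)
    assume "\<not> (\<exists>p\<in>L. u p \<noteq> 0)"
    then have "?v = 0" unfolding u by (intro sum.neutral) auto
    then show False by (metis lookup_single_eq lookup_zero one_neq_zero)
  qed
  then obtain p where p: "p \<in> L" "u p \<noteq> 0" by blast
  then have "\<pi> p = s" using coeff by (auto simp: lookup_single when_def split: if_splits)
  then have "u p = 1" using coeff[OF p(1)] by simp
  have "u p' = 0" if "p' \<in> L" "p' \<noteq> p" for p'
  proof -
    have "Poly_Mapping.lookup p (\<pi> p') = 0" using piv0[OF that(1) p(1)] that(2) by blast
    then have "\<pi> p' \<noteq> s" using piv[OF p(1)] \<open>\<pi> p = s\<close> by (metis zero_neq_one)
    then show ?thesis using coeff[OF that(1)] by (simp add: lookup_single when_def)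
  qed
  then have "?v = pscale (u p) p"
    unfolding u using fin p(1) by (simp add: sum.remove[of L p] sum.neutral)
  then show ?thesis using \<open>u p = 1\<close> p(1) by simp
qed

lemma var_mem_LI:
  fixes gs :: "'a::field mpoly list"
  assumes "distinct zs" "var z \<in> Kspan (set gs)"
  shows "var z \<in> set (LI zs gs)"
  unfolding var_def
proof (rule monomial_mem_if_in_span_of_pivoted)
  show "Poly_Mapping.single (var_term z) 1 \<in> Kspan (set (LI zs gs))"
    using assms(2) unfolding span_LI[OF assms(1)] var_def .
qed (use LI_pivot[OF assms(1)] in auto)

section \<open>CHECK succeeds for separable input\<close>

definition leading_vars :: "(pterm \<Rightarrow> pterm \<Rightarrow> bool) \<Rightarrow> 'a::zero mpoly set \<Rightarrow> nat list \<Rightarrow> bool" where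
  "leading_vars tle V zs \<longleftrightarrow>
     (\<forall>z\<in>set zs. \<exists>f\<in>V. var_term z \<in> Poly_Mapping.keys f \<and> (\<forall>s\<in>Poly_Mapping.keys f. tle s (var_term z)))"

lemma leading_vars_if_Z_separating:
  assumes "Z_separating n zs fs" "set fs \<subseteq> V" "\<forall>f\<in>V. in_P n f"
  obtains tle where "term_ordering n tle" "leading_vars tle V zs"
proof -
  obtain tle where TO: "term_ordering n tle" and fs: "length fs = length zs"
    and LT: "\<forall>i<length zs. fs ! i \<noteq> 0 \<and> LT tle (fs ! i) = var_term (zs ! i)"
    using assms(1) unfolding Z_separating_def by blast
  have "leading_vars tle V zs"
    unfolding leading_vars_def
  proof
    fix z assume "z \<in> set zs"
    then obtain i where i: "i < length zs" "z = zs ! i" by (auto simp: in_set_conv_nth)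
    then have fi: "fs ! i \<in> V" using fs assms(2) by auto
    have "fs ! i \<noteq> 0" "LT tle (fs ! i) = var_term z" using LT i by auto
    then have "var_term z \<in> Poly_Mapping.keys (fs ! i) \<and> (\<forall>s\<in>Poly_Mapping.keys (fs ! i). tle s (var_term z))"
      using LT_in_keys_max[OF TO, of "fs ! i"] assms(3) fi by simp
    then show "\<exists>f\<in>V. var_term z \<in> Poly_Mapping.keys f \<and> (\<forall>s\<in>Poly_Mapping.keys f. tle s (var_term z))"
      using fi by blast
  qed
  with TO that show ?thesis by blast
qed

lemma del_nondiv_eq_if_min_leading:
  assumes TO: "term_ordering n tle" and "in_P n f" "set zs \<subseteq> {..<n}"
    and z: "z \<in> set zs" "\<forall>z'\<in>set zs. tle (var_term z) (var_term z')"
    and lead: "\<forall>s\<in>Poly_Mapping.keys f. tle s (var_term z)"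
  shows "del_nondiv zs f = pscale (Poly_Mapping.lookup f (var_term z)) (var z)"
proof -
  have vt: "is_term n (var_term z')" if "z' \<in> set zs" for z'
    using that assms(3) is_term_var_term by blast
  have only_z: "t = var_term z" if tf: "t \<in> Poly_Mapping.keys f" and "involves zs t" for t
  proof -
    obtain z' where z': "z' \<in> set zs" "0 < Poly_Mapping.lookup t z'"
      using \<open>involves zs t\<close> unfolding involves_def by blast
    have t: "is_term n t" using assms(2) tf unfolding in_P_def by blast
    have "tle (var_term z') t"
      using var_term_le_if_divides[OF TO t _ z'(2)] z'(1) assms(3) by blast
    then have "tle (var_term z) t"
      using term_ordering_trans[OF TO vt[OF z(1)] vt[OF z'(1)] t] z(2) z'(1) by blast
    then show ?thesis
      using term_ordering_antisym[OF TO t vt[OF z(1)]] lead tf by blast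
  qed
  show ?thesis
  proof (rule poly_mapping_eqI)
    fix t
    show "Poly_Mapping.lookup (del_nondiv zs f) t =
        Poly_Mapping.lookup (pscale (Poly_Mapping.lookup f (var_term z)) (var z)) t"
    proof (cases "t = var_term z")
      case True
      then show ?thesis using involves_var_term[OF z(1)] by (simp add: lookup_del_nondiv var_def)
    next
      case False
      then have "\<not> (t \<in> Poly_Mapping.keys f \<and> involves zs t)" using only_z by blast
      then show ?thesis using False by (auto simp: lookup_del_nondiv var_def lookup_single when_def in_keys_iff)
    qed
  qed
qed

lemma var_mem_del_nondiv_image:
  fixes V :: "'a::field mpoly set"
  assumes TO: "term_ordering n tle" and lead: "leading_vars tle V zs0"
    and sub: "K.subspace V" and inP: "\<forall>f\<in>V. in_P n f" and zs0: "set zs0 \<subseteq> {..<n}"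
    and zs: "set zs \<subseteq> set zs0" "zs \<noteq> []"
  shows "\<exists>z\<in>set zs. var z \<in> del_nondiv zs ` V"
proof -
  have zs_n: "set zs \<subseteq> {..<n}" using zs(1) zs0 by (rule subset_trans)
  have "\<exists>m\<in>var_term ` set zs. \<forall>s\<in>var_term ` set zs. tle m s"
    using zs(2) zs_n is_term_var_term by (intro term_ordering_has_min[OF TO]) auto
  then obtain z where z: "z \<in> set zs" "\<forall>z'\<in>set zs. tle (var_term z) (var_term z')"
    by blast
  obtain f where f: "f \<in> V" "var_term z \<in> Poly_Mapping.keys f"
    "\<forall>s\<in>Poly_Mapping.keys f. tle s (var_term z)"
    using lead z(1) zs(1) unfolding leading_vars_def by blast
  define c where "c = Poly_Mapping.lookup f (var_term z)"
  have "c \<noteq> 0" using f(2) unfolding c_def by (simp add: in_keys_iff)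
  have f_red: "del_nondiv zs f = pscale c (var z)"
    unfolding c_def by (rule del_nondiv_eq_if_min_leading[OF TO inP[rule_format, OF f(1)] zs_n z f(3)])
  have "var z = del_nondiv zs (pscale (inverse c) f)"
    unfolding module_hom.scale[OF del_nondiv_linear] f_red K.scale_scale
    using \<open>c \<noteq> 0\<close> by simp
  then have "var z \<in> del_nondiv zs ` V"
    by (rule image_eqI) (rule K.subspace_scale[OF sub f(1)])
  then show ?thesis using z(1) by blast
qed

lemma check_loop_not_None:
  fixes V :: "'a::field mpoly set"
  assumes TO: "term_ordering n tle" and lead: "leading_vars tle V zs0"
    and sub: "K.subspace V" and inP: "\<forall>f\<in>V. in_P n f" and zs0: "set zs0 \<subseteq> {..<n}"
  shows "set zs \<subseteq> set zs0 \<Longrightarrow> distinct zs \<Longrightarrow> zs \<noteq> [] \<Longrightarrow>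
    Kspan (set gs) = del_nondiv zs ` V \<Longrightarrow> check_loop \<delta> d zs gs w \<noteq> None"
proof (induction \<delta> d zs gs w rule: check_loop.induct)
  case (1 \<delta> d zs gs w)
  define gs1 where "gs1 = LI zs gs"
  define zt where "zt = filter (\<lambda>z. var z \<in> set gs1) zs"
  define w' where "w' = (\<lambda>k. if k \<in> set zt then d else w k)"
  define zs' where "zs' = filter (\<lambda>z. z \<notin> set zt) zs"
  define gs2 where "gs2 = map (del_nondiv zs') gs1"
  obtain z where "z \<in> set zs" "var z \<in> Kspan (set gs)"
    using var_mem_del_nondiv_image[OF TO lead sub inP zs0 "1.prems"(1,3)] "1.prems"(4) by auto
  then have "zt \<noteq> []"
    using var_mem_LI[OF "1.prems"(2)] unfolding zt_def gs1_def by (auto simp: filter_empty_conv)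
  then have step: "check_loop \<delta> d zs gs w =
      (if zs' = [] then Some w' else check_loop \<delta> (\<delta> * d + 1) zs' gs2 w')"
    unfolding gs1_def zt_def w'_def zs'_def gs2_def by (subst check_loop.simps) (simp add: Let_def)
  have zs'_zs: "set zs' \<subseteq> set zs" unfolding zs'_def by auto
  have "Kspan (set gs2) = del_nondiv zs' ` Kspan (set gs1)"
    unfolding gs2_def set_map by (rule module_hom.span_image[OF del_nondiv_linear])
  also have "\<dots> = del_nondiv zs' ` V"
    unfolding gs1_def span_LI[OF "1.prems"(2)] "1.prems"(4) image_image
    by (simp add: del_nondiv_del_nondiv[OF zs'_zs])
  finally have span_gs2: "Kspan (set gs2) = del_nondiv zs' ` V" .
  have "check_loop \<delta> (\<delta> * d + 1) zs' gs2 w' \<noteq> None" if "zs' \<noteq> []"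
    by (rule "1.IH"[OF gs1_def zt_def \<open>zt \<noteq> []\<close> w'_def zs'_def gs2_def that])
      (use "1.prems"(1,2) zs'_zs span_gs2 that in \<open>auto simp: zs'_def\<close>)
  then show ?case using step by auto
qed

lemma triangular_independent:
  fixes q :: "'b \<Rightarrow> 'a::field mpoly"
  assumes fin: "finite A"
    and total: "\<And>a b. a \<in> A \<Longrightarrow> b \<in> A \<Longrightarrow> ord a b \<or> ord b a"
    and trans: "\<And>a b c. a \<in> A \<Longrightarrow> b \<in> A \<Longrightarrow> c \<in> A \<Longrightarrow> ord a b \<Longrightarrow> ord b c \<Longrightarrow> ord a c"
    and antisym: "\<And>a b. a \<in> A \<Longrightarrow> b \<in> A \<Longrightarrow> ord a b \<Longrightarrow> ord b a \<Longrightarrow> a = b"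
    and diag: "\<And>a. a \<in> A \<Longrightarrow> Poly_Mapping.lookup (q a) (\<tau> a) \<noteq> 0"
    and upper: "\<And>a b. a \<in> A \<Longrightarrow> b \<in> A \<Longrightarrow> Poly_Mapping.lookup (q b) (\<tau> a) \<noteq> 0 \<Longrightarrow> ord a b"
  shows "inj_on q A" and "K.independent (q ` A)"
proof -
  show inj: "inj_on q A"
  proof (rule inj_onI)
    fix a b assume ab: "a \<in> A" "b \<in> A" "q a = q b"
    then have "ord a b" "ord b a" using diag upper by metis+
    then show "a = b" using antisym ab by blast
  qed
  show "K.independent (q ` A)"
  proof
    assume "K.dependent (q ` A)"
    then obtain c where c: "\<exists>v\<in>q ` A. c v \<noteq> 0" and "(\<Sum>v\<in>q ` A. pscale (c v) v) = 0"
      unfolding K.dependent_finite[OF finite_imageI[OF fin]] by blast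
    then have sum0: "(\<Sum>b\<in>A. pscale (c (q b)) (q b)) = 0"
      by (simp add: sum.reindex[OF inj])
    define S where "S = {b\<in>A. c (q b) \<noteq> 0}"
    have "finite S" "S \<noteq> {}" using fin c unfolding S_def by auto
    then obtain a where a: "a \<in> S" "\<forall>b\<in>S. ord b a"
      using finite_total_has_max[of S ord] total trans unfolding S_def by blast
    have "0 = (\<Sum>b\<in>A. c (q b) * Poly_Mapping.lookup (q b) (\<tau> a))"
      using arg_cong[OF sum0, of "\<lambda>p. Poly_Mapping.lookup p (\<tau> a)"] by (simp add: lookup_sum)
    also have "\<dots> = (\<Sum>b\<in>A. if b = a then c (q a) * Poly_Mapping.lookup (q a) (\<tau> a) else 0)"
    proof (rule sum.cong[OF refl])
      fix b assume b: "b \<in> A"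
      show "c (q b) * Poly_Mapping.lookup (q b) (\<tau> a) =
          (if b = a then c (q a) * Poly_Mapping.lookup (q a) (\<tau> a) else 0)"
      proof (cases "b = a \<or> c (q b) = 0")
        case False
        then have "ord b a" using a b unfolding S_def by blast
        then have "Poly_Mapping.lookup (q b) (\<tau> a) = 0"
          using upper[of a b] antisym[of a b] a(1) b False unfolding S_def by blast
        then show ?thesis using False by simp
      qed auto
    qed
    also have "\<dots> = c (q a) * Poly_Mapping.lookup (q a) (\<tau> a)"
      using a(1) fin unfolding S_def by simp
    finally show False using a(1) diag unfolding S_def by simp
  qed
qed

lemma length_le_Kdim_Lin:
  fixes gs :: "'a::field mpoly list"
  assumes TO: "term_ordering n tle" and lead: "leading_vars tle (Kspan (set gs)) zs"
    and zs: "set zs \<subseteq> {..<n}" "distinct zs"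
  shows "length zs \<le> Kdim (Lin ` set (map (del_nondiv zs) gs))"
proof -
  have vt: "is_term n (var_term z)" if "z \<in> set zs" for z
    using that zs is_term_var_term by blast
  obtain F where F: "\<And>z. z \<in> set zs \<Longrightarrow> F z \<in> Kspan (set gs) \<and> var_term z \<in> Poly_Mapping.keys (F z) \<and>
      (\<forall>s\<in>Poly_Mapping.keys (F z). tle s (var_term z))"
    using lead unfolding leading_vars_def by metis
  define q where "q z = Lin (del_nondiv zs (F z))" for z
  have lookup_q: "Poly_Mapping.lookup (q z) t =
      (if tdeg t = 1 \<and> involves zs t then Poly_Mapping.lookup (F z) t else 0)" for z t
    unfolding q_def by (simp add: lookup_Lin lookup_del_nondiv)
  have diag: "Poly_Mapping.lookup (q a) (var_term a) \<noteq> 0" if "a \<in> set zs" for a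
    using F[OF that] involves_var_term[OF that] by (simp add: lookup_q tdeg_var_term in_keys_iff)
  have upper: "tle (var_term a) (var_term b)"
    if "a \<in> set zs" "b \<in> set zs" "Poly_Mapping.lookup (q b) (var_term a) \<noteq> 0" for a b
  proof -
    have "var_term a \<in> Poly_Mapping.keys (F b)"
      using that(3) by (auto simp: lookup_q in_keys_iff split: if_splits)
    then show ?thesis using F[OF that(2)] by blast
  qed
  have total: "tle (var_term a) (var_term b) \<or> tle (var_term b) (var_term a)"
    if "a \<in> set zs" "b \<in> set zs" for a b
    using term_ordering_total[OF TO vt vt] that .
  have trans: "tle (var_term a) (var_term c)"
    if "a \<in> set zs" "b \<in> set zs" "c \<in> set zs"
      "tle (var_term a) (var_term b)" "tle (var_term b) (var_term c)" for a b c
    using term_ordering_trans[OF TO vt vt vt] that by blast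
  have antisym: "a = b"
    if "a \<in> set zs" "b \<in> set zs" "tle (var_term a) (var_term b)" "tle (var_term b) (var_term a)" for a b
    using term_ordering_antisym[OF TO vt vt] that var_term_eq_iff by blast
  note triangular = triangular_independent[OF finite_set total trans antisym diag upper]
  have indep: "K.independent (q ` set zs)" by (rule triangular(2))
  have "card (q ` set zs) = length zs"
    using triangular(1) zs(2) by (simp add: card_image distinct_card)
  moreover have "q ` set zs \<subseteq> Kspan (Lin ` set (map (del_nondiv zs) gs))"
    unfolding set_map module_hom.span_image[OF Lin_linear] module_hom.span_image[OF del_nondiv_linear]
    using F unfolding q_def by blast
  ultimately show ?thesis
    using K.card_le_dim_if_independent_in_span[OF _ indep] by (metis finite_imageI finite_set)
qed

section \<open>Weights produced by CHECK separate\<close>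

definition weight_leads :: "(nat \<Rightarrow> nat) \<Rightarrow> 'a::zero mpoly set \<Rightarrow> nat list \<Rightarrow> bool" where
  "weight_leads W V zs \<longleftrightarrow> (\<forall>z\<in>set zs. \<exists>f\<in>V. var_term z \<in> Poly_Mapping.keys f \<and>
     (\<forall>t\<in>Poly_Mapping.keys f. t \<noteq> var_term z \<longrightarrow> wdeg W t < W z))"

lemma Z_separating_if_weight_leads:
  assumes "weight_leads W V zs"
  shows "\<exists>fs. set fs \<subseteq> V \<and> Z_separating n zs fs"
proof -
  obtain F where F: "\<And>z. z \<in> set zs \<Longrightarrow> F z \<in> V \<and> var_term z \<in> Poly_Mapping.keys (F z) \<and>
      (\<forall>t\<in>Poly_Mapping.keys (F z). t \<noteq> var_term z \<longrightarrow> wdeg W t < W z)"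
    using assms unfolding weight_leads_def by metis
  have LT: "LT (wdeg_ord W) (F z) = var_term z" if "z \<in> set zs" for z
  proof (rule LT_eqI)
    have below: "wdeg W t < W z" if "t \<in> Poly_Mapping.keys (F z)" "t \<noteq> var_term z" for t
      using F \<open>z \<in> set zs\<close> that by blast
    show "var_term z \<in> Poly_Mapping.keys (F z)" using F that by blast
    show "\<forall>s\<in>Poly_Mapping.keys (F z). wdeg_ord W s (var_term z)"
      using below by (metis order.refl wdeg_ord_def wdeg_var_term)
    show "\<forall>s\<in>Poly_Mapping.keys (F z). wdeg_ord W (var_term z) s \<longrightarrow> s = var_term z"
      using below by (metis not_less_iff_gr_or_eq wdeg_ord_def wdeg_var_term)
  qed
  have "Z_separating n zs (map F zs)"
    unfolding Z_separating_def
  proof (intro conjI exI[of _ "wdeg_ord W"] allI impI)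
    fix i assume "i < length zs"
    then show "map F zs ! i \<noteq> 0" "LT (wdeg_ord W) (map F zs ! i) = var_term (zs ! i)"
      using F[of "zs ! i"] LT[of "zs ! i"] by auto
  qed (simp_all add: term_ordering_wdeg_ord)
  then show ?thesis using F by (intro exI[of _ "map F zs"]) auto
qed

lemma weight_leads_removed:
  fixes V :: "'a::field mpoly set"
  assumes deg: "\<forall>f\<in>V. \<forall>t\<in>Poly_Mapping.keys f. tdeg t \<le> \<delta>"
    and z: "z \<in> set zs" "var z \<in> del_nondiv zs ` V"
    and W: "\<forall>k. k \<notin> set zs \<longrightarrow> W k = w k" "\<forall>i. w i \<le> M" "M * \<delta> < W z"
  shows "\<exists>f\<in>V. var_term z \<in> Poly_Mapping.keys f \<and>
    (\<forall>t\<in>Poly_Mapping.keys f. t \<noteq> var_term z \<longrightarrow> wdeg W t < W z)"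
proof -
  obtain f where f: "f \<in> V" "del_nondiv zs f = var z" using z(2) by auto
  have lookup_f: "Poly_Mapping.lookup f t = Poly_Mapping.lookup (var z) t" if "involves zs t" for t
    using arg_cong[OF f(2), of "\<lambda>p. Poly_Mapping.lookup p t"] that by (simp add: lookup_del_nondiv)
  have "wdeg W t < W z" if t: "t \<in> Poly_Mapping.keys f" "t \<noteq> var_term z" for t
  proof -
    have "\<not> involves zs t"
      using lookup_f t by (auto simp: var_def lookup_single when_def in_keys_iff)
    have "wdeg W t = wdeg w t"
    proof (rule wdeg_cong)
      fix i assume "i \<in> Poly_Mapping.keys t"
      then have "i \<notin> set zs" using \<open>\<not> involves zs t\<close> by (auto simp: involves_def in_keys_iff)
      then show "W i = w i" using W(1) by blast
    qed
    also have "\<dots> \<le> M * tdeg t" using W(2) by (intro wdeg_le_tdeg) blast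
    also have "\<dots> \<le> M * \<delta>" using deg f(1) t(1) by simp
    finally show ?thesis using W(3) by simp
  qed
  moreover have "var_term z \<in> Poly_Mapping.keys f"
    using lookup_f[OF involves_var_term[OF z(1)]] by (simp add: var_def in_keys_iff)
  ultimately show ?thesis using f(1) by blast
qed

lemma check_loop_weight_leads:
  fixes V :: "'a::field mpoly set"
  assumes deg: "\<forall>f\<in>V. \<forall>t\<in>Poly_Mapping.keys f. tdeg t \<le> \<delta>"
  shows "check_loop \<delta> d zs gs w = Some W \<Longrightarrow> distinct zs \<Longrightarrow>
    Kspan (set gs) \<subseteq> del_nondiv zs ` V \<Longrightarrow> \<forall>i. w i \<le> M \<Longrightarrow> M * \<delta> < d \<Longrightarrow>
    (\<forall>k. k \<notin> set zs \<longrightarrow> W k = w k) \<and> weight_leads W V zs"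
proof (induction \<delta>' \<equiv> \<delta> d zs gs w arbitrary: M W rule: check_loop.induct)
  case (1 d zs gs w)
  define gs1 where "gs1 = LI zs gs"
  define zt where "zt = filter (\<lambda>z. var z \<in> set gs1) zs"
  define w' where "w' = (\<lambda>k. if k \<in> set zt then d else w k)"
  define zs' where "zs' = filter (\<lambda>z. z \<notin> set zt) zs"
  define gs2 where "gs2 = map (del_nondiv zs') gs1"
  have "zt \<noteq> []"
    using "1.prems"(1) unfolding gs1_def zt_def by (subst (asm) check_loop.simps) (auto simp: Let_def)
  then have step: "check_loop \<delta> d zs gs w =
      (if zs' = [] then Some w' else check_loop \<delta> (\<delta> * d + 1) zs' gs2 w')"
    unfolding gs1_def zt_def w'_def zs'_def gs2_def by (subst check_loop.simps) (simp add: Let_def)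
  have span_gs1: "Kspan (set gs1) \<subseteq> del_nondiv zs ` V"
    unfolding gs1_def span_LI[OF "1.prems"(2)] by (rule "1.prems"(3))
  have removed: "\<exists>f\<in>V. var_term z \<in> Poly_Mapping.keys f \<and>
      (\<forall>t\<in>Poly_Mapping.keys f. t \<noteq> var_term z \<longrightarrow> wdeg W' t < W' z)"
    if z: "z \<in> set zt" and W': "\<forall>k. k \<notin> set zs' \<longrightarrow> W' k = w' k" for z W'
  proof (rule weight_leads_removed[OF deg, where w = w and M = M])
    show "z \<in> set zs" using z unfolding zt_def by simp
    show "var z \<in> del_nondiv zs ` V"
      using z span_gs1 K.span_base[of "var z" "set gs1"] unfolding zt_def by auto
    show "\<forall>k. k \<notin> set zs \<longrightarrow> W' k = w k"
      using W' unfolding zs'_def w'_def zt_def by auto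
    show "\<forall>i. w i \<le> M" by (rule "1.prems"(4))
    show "M * \<delta> < W' z"
      using W' z "1.prems"(5) unfolding zs'_def w'_def by auto
  qed
  show ?case
  proof (cases "zs' = []")
    case True
    then have W: "W = w'" using step "1.prems"(1) by simp
    have "set zs \<subseteq> set zt" using True unfolding zs'_def by (auto simp: filter_empty_conv)
    then have "weight_leads W V zs"
      unfolding weight_leads_def using removed[of _ W] W by blast
    moreover have "\<forall>k. k \<notin> set zs \<longrightarrow> W k = w k" unfolding W w'_def zt_def by auto
    ultimately show ?thesis by blast
  next
    case False
    have zs'_zs: "set zs' \<subseteq> set zs" unfolding zs'_def by auto
    have "Kspan (set gs2) = del_nondiv zs' ` Kspan (set gs1)"
      unfolding gs2_def set_map by (rule module_hom.span_image[OF del_nondiv_linear])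
    also have "\<dots> \<subseteq> del_nondiv zs' ` del_nondiv zs ` V"
      using span_gs1 by (rule image_mono)
    also have "\<dots> = del_nondiv zs' ` V"
      by (simp add: image_image del_nondiv_del_nondiv[OF zs'_zs])
    finally have span_gs2: "Kspan (set gs2) \<subseteq> del_nondiv zs' ` V" .
    have rec: "check_loop \<delta> (\<delta> * d + 1) zs' gs2 w' = Some W" using step False "1.prems"(1) by simp
    have w'_le: "\<forall>i. w' i \<le> max M d" using "1.prems"(4) unfolding w'_def by (simp add: le_max_iff_disj)
    have d_gt: "max M d * \<delta> < \<delta> * d + 1"
    proof (cases "M \<le> d")
      case False
      have "\<delta> = 0 \<or> d \<le> \<delta> * d + 1" by (cases \<delta>) simp_all
      then show ?thesis using False "1.prems"(5) by auto
    qed (simp add: mult.commute)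
    have IH: "(\<forall>k. k \<notin> set zs' \<longrightarrow> W k = w' k) \<and> weight_leads W V zs'"
      by (rule "1.hyps"[OF gs1_def zt_def \<open>zt \<noteq> []\<close> w'_def zs'_def gs2_def False rec _ span_gs2 w'_le d_gt])
        (use "1.prems"(2) in \<open>simp add: zs'_def\<close>)
    have "weight_leads W V zs"
      unfolding weight_leads_def
    proof
      fix z assume "z \<in> set zs"
      then consider "z \<in> set zt" | "z \<in> set zs'" unfolding zs'_def by auto
      then show "\<exists>f\<in>V. var_term z \<in> Poly_Mapping.keys f \<and>
          (\<forall>t\<in>Poly_Mapping.keys f. t \<noteq> var_term z \<longrightarrow> wdeg W t < W z)"
        by cases (use IH removed[of z W] in \<open>auto simp: weight_leads_def\<close>)
    qed
    moreover have "\<forall>k. k \<notin> set zs \<longrightarrow> W k = w k"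
      using IH zs'_zs unfolding w'_def zt_def by auto
    ultimately show ?thesis by blast
  qed
qed

lemma Z_separating_if_CHECK:
  fixes gs :: "'a::field mpoly list"
  assumes "distinct zs" "CHECK n gs zs \<noteq> None"
  shows "\<exists>fs. set fs \<subseteq> Kspan (set gs) \<and> Z_separating n zs fs"
proof -
  obtain W where W: "check_loop (Max (insert 0 (pdeg ` set gs))) 1 zs (map (del_nondiv zs) gs) (\<lambda>_. 0) = Some W"
    using assms(2) unfolding CHECK_def Let_def by (auto split: if_splits simp del: check_loop.simps)
  have "(\<forall>k. k \<notin> set zs \<longrightarrow> W k = 0) \<and> weight_leads W (Kspan (set gs)) zs"
  proof (rule check_loop_weight_leads[OF _ W assms(1), where M = 0])
    show "\<forall>f\<in>Kspan (set gs). \<forall>t\<in>Poly_Mapping.keys f. tdeg t \<le> Max (insert 0 (pdeg ` set gs))"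
      using tdeg_le_if_in_span by blast
    show "Kspan (set (map (del_nondiv zs) gs)) \<subseteq> del_nondiv zs ` Kspan (set gs)"
      unfolding set_map module_hom.span_image[OF del_nondiv_linear] ..
  qed simp_all
  then show ?thesis by (intro Z_separating_if_weight_leads) blast
qed

lemma CHECK_if_Z_separating:
  fixes gs :: "'a::field mpoly list"
  assumes inP: "\<forall>g\<in>set gs. in_P n g" and zs: "distinct zs" "set zs \<subseteq> {..<n}" "zs \<noteq> []"
    and fs: "set fs \<subseteq> Kspan (set gs)" "Z_separating n zs fs"
  shows "CHECK n gs zs \<noteq> None"
proof -
  have inP_span: "\<forall>f\<in>Kspan (set gs). in_P n f" using in_P_if_in_span[OF inP] by blast
  obtain tle where TO: "term_ordering n tle" and lead: "leading_vars tle (Kspan (set gs)) zs"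
    using leading_vars_if_Z_separating[OF fs(2,1) inP_span] .
  have "check_loop (Max (insert 0 (pdeg ` set gs))) 1 zs (map (del_nondiv zs) gs) (\<lambda>_. 0) \<noteq> None"
    by (rule check_loop_not_None[OF TO lead K.subspace_span inP_span zs(2) order_refl zs(1,3)])
      (simp only: set_map module_hom.span_image[OF del_nondiv_linear])
  then show ?thesis
    using length_le_Kdim_Lin[OF TO lead zs(2,1)]
    by (simp add: CHECK_def Let_def del: check_loop.simps)
qed

theorem proposition3p3:
  fixes n :: nat and gs :: "'a::field mpoly list" and zs :: "nat list"
  assumes "\<forall>g\<in>set gs. in_P n g"
    and "distinct zs" and "set zs \<subseteq> {..<n}" and "zs \<noteq> []"
  shows "CHECK n gs zs \<noteq> None \<longleftrightarrow>
    (\<exists>fs. (\<forall>f\<in>set fs. f \<in> ideal_P n gs \<and> f \<in> Kspan (set gs)) \<and> Z_separating n zs fs)"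
proof
  assume "CHECK n gs zs \<noteq> None"
  then show "\<exists>fs. (\<forall>f\<in>set fs. f \<in> ideal_P n gs \<and> f \<in> Kspan (set gs)) \<and> Z_separating n zs fs"
    using Z_separating_if_CHECK[OF assms(2)] span_subset_ideal_P by blast
next
  assume "\<exists>fs. (\<forall>f\<in>set fs. f \<in> ideal_P n gs \<and> f \<in> Kspan (set gs)) \<and> Z_separating n zs fs"
  then show "CHECK n gs zs \<noteq> None"
    using CHECK_if_Z_separating[OF assms] by blast
qed

end
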